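(* Let $d\ge 2$ and $N\in\mathbb{N}$, and let $$P(\mathbf{x}):=\left(\frac{4^{N-1}}{N\binom{2N-2}{N-1}}\right)^d\prod_{j=1}^d\sin^{2N-2}(\pi x_j/N),\qquad \mathbf{x}\in\mathbb{R}^d.$$ Then $P\chi_{[0,N]^d}$ satisfies the partition of unity condition $$\sum_{\mathbf{n}\in\mathbb{Z}^d} P(\mathbf{x}+\mathbf{n})\chi_{[0,N]^d}(\mathbf{x}+\mathbf{n})=1\quad\text{for all }\mathbf{x}\in\mathbb{R}^d,$$ and $P\chi_{[0,N]^d}\in C^{2N-3}(\mathbb{R}^d)$.
   Context: $\chi_{[0,N]^d}$ is the indicator function of $[0,N]^d$. $C^{m}(\mathbb{R}^d)$ denotes functions with continuous partial derivatives of all total orders at most $m$. *)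

theory Defs
  imports "HOL-Analysis.Analysis"
begin

definition Ptrig :: "nat \<Rightarrow> real^'n \<Rightarrow> real" where
  "Ptrig N x = ((4::real) ^ (N - 1) / (real N * real ((2*N - 2) choose (N - 1)))) ^ CARD('n)
      * (\<Prod>j\<in>UNIV. sin (pi * x $ j / real N) ^ (2*N - 2))"

definition cubeN :: "nat \<Rightarrow> (real^'n) set" where
  "cubeN N = {x. \<forall>j. 0 \<le> x $ j \<and> x $ j \<le> real N}"

definition latt :: "int^'n \<Rightarrow> real^'n" where
  "latt n = (\<chi> j. real_of_int (n $ j))"

text \<open>C^m(R^d): all partial derivatives of total order at most m exist everywhere
  and are continuous.\<close>
fun Cm :: "nat \<Rightarrow> (real^'n \<Rightarrow> real) \<Rightarrow> bool" where
  "Cm 0 f = continuous_on UNIV f"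
| "Cm (Suc m) f = (continuous_on UNIV f \<and>
      (\<forall>i. \<exists>g. (\<forall>x. ((\<lambda>t. f (x + t *\<^sub>R axis i 1)) has_real_derivative g x) (at 0)) \<and> Cm m g))"

end

theory Submission
  imports Defs
begin

text \<open>
  \<open>P \<chi>\<close> is the tensor product of the one-dimensional bump
  \<open>b(t) = c sin(\<pi> t / N)^(2m) \<chi>[0,N](t)\<close> with \<open>m = N - 1\<close>, so both claims reduce to
  dimension one.  For fixed \<open>y\<close>, the translates \<open>y + k\<close> that meet \<open>[0,N)\<close> form a window of
  \<open>N\<close> consecutive integers (the endpoint \<open>N\<close> contributes zero).  Expanding \<open>sin^(2m)\<close> by
  Euler's formula turns the sum over such a window into sums over \<open>N\<close>-th roots of unity,
  which annihilate every frequency except the constant one and leave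
  \<open>N (2m choose m) / 4^m = 1 / c\<close>.
  For smoothness: the derivative of \<open>sin(a t)^j g(t)\<close>, with \<open>g\<close> a trigonometric polynomial
  in \<open>a t\<close>, is \<open>sin(a t)^(j-1)\<close> times another such polynomial, and \<open>sin(\<pi> t / N)\<close> vanishes
  at both ends of \<open>[0,N]\<close>; hence cutting \<open>sin(\<pi> t / N)^(2m)\<close> off outside \<open>[0,N]\<close> keeps
  \<open>2m - 1 = 2N - 3\<close> continuous derivatives.
\<close>

lemma sin_power_even_eq_exp_sum:
  fixes \<theta> :: real and m :: nat
  shows "complex_of_real (sin \<theta> ^ (2*m)) =
    (\<Sum>k\<le>2*m. of_nat ((2*m) choose k) * (-1)^(2*m-k) *
        exp (\<i> * of_real (2 * real_of_int (int k - int m) * \<theta>))) / (-4)^m"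
proof -
  define E where "E = exp (\<i> * of_real \<theta>)"
  define E' where "E' = exp (-(\<i> * of_real \<theta>))"
  have "complex_of_real (sin \<theta>) = (E + (-E')) / (2*\<i>)"
    unfolding E_def E'_def by (simp add: sin_of_real[symmetric] sin_exp_eq)
  hence "complex_of_real (sin \<theta> ^ (2*m)) = (E + (-E'))^(2*m) / (2*\<i>)^(2*m)"
    by (simp only: of_real_power power_divide)
  also have "(2*\<i>)^(2*m) = (-4::complex)^m"
    by (simp add: power_mult power_mult_distrib)
  also have "(E + (-E'))^(2*m) = (\<Sum>k\<le>2*m. of_nat ((2*m) choose k) * E^k * (-E')^(2*m-k))"
    by (rule binomial_ring)
  also have "\<dots> = (\<Sum>k\<le>2*m. of_nat ((2*m) choose k) * (-1)^(2*m-k) *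
        exp (\<i> * of_real (2 * real_of_int (int k - int m) * \<theta>)))"
  proof (rule sum.cong[OF refl])
    fix k assume k: "k \<in> {..2*m}"
    have "E^k * E'^(2*m-k) =
        exp (of_nat k * (\<i> * of_real \<theta>) + of_nat (2*m-k) * (-(\<i> * of_real \<theta>)))"
      unfolding E_def E'_def exp_of_nat_mult exp_add ..
    also have "of_nat k * (\<i> * of_real \<theta>) + of_nat (2*m-k) * (-(\<i> * of_real \<theta>)) =
        \<i> * of_real (2 * real_of_int (int k - int m) * \<theta>)"
      using k by (simp add: of_nat_diff algebra_simps)
    finally show "of_nat ((2*m) choose k) * E^k * (-E')^(2*m-k) = of_nat ((2*m) choose k) *
        (-1)^(2*m-k) * exp (\<i> * of_real (2 * real_of_int (int k - int m) * \<theta>))"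
      by (simp add: power_minus[of E'] mult_ac)
  qed
  finally show ?thesis .
qed

lemma sum_exp_shifted_roots_of_unity:
  fixes p :: int and z :: real
  assumes p: "\<bar>p\<bar> < int N"
  shows "(\<Sum>i<N. exp (\<i> * of_real (2 * real_of_int p * (pi * (z + real i) / real N)))) =
      (if p = 0 then of_nat N else 0)"
proof -
  have N: "real N \<noteq> 0" using p by simp
  define \<omega> where "\<omega> = exp (\<i> * of_real (2 * real_of_int p * pi / real N))"
  define c where "c = exp (\<i> * of_real (2 * real_of_int p * pi * z / real N))"
  have term_eq: "exp (\<i> * of_real (2 * real_of_int p * (pi * (z + real i) / real N))) = c * \<omega>^i"
    for i
  proof -
    have "\<i> * of_real (2 * real_of_int p * (pi * (z + real i) / real N)) =
        \<i> * of_real (2 * real_of_int p * pi * z / real N) +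
        of_nat i * (\<i> * of_real (2 * real_of_int p * pi / real N))"
      by (simp add: algebra_simps add_divide_distrib)
    thus ?thesis unfolding c_def \<omega>_def by (simp only: exp_add exp_of_nat_mult)
  qed
  have "\<omega>^N = exp (\<i> * of_real (2 * real_of_int p * pi))"
    unfolding \<omega>_def exp_of_nat_mult[symmetric] using N by (simp add: field_simps)
  also have "\<dots> = 1"
    unfolding exp_eq_1 by (auto intro!: exI[of _ p])
  finally have \<omega>_power_N: "\<omega>^N = 1" .
  have \<omega>_eq_1: "\<omega> = 1 \<longleftrightarrow> p = 0"
  proof
    assume "\<omega> = 1"
    then obtain n :: int where "2 * real_of_int p * pi / real N = real_of_int (2*n) * pi"
      unfolding \<omega>_def exp_eq_1 by auto
    hence "real_of_int p = real_of_int (n * int N)"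
      using N by (simp add: field_simps)
    hence p_eq: "p = n * int N" by (rule of_int_eq_iff[THEN iffD1])
    with p have "\<bar>n\<bar> * int N < 1 * int N" by (simp add: abs_mult)
    hence "n = 0" by (subst (asm) mult_less_cancel_right) auto
    with p_eq show "p = 0" by simp
  qed (simp add: \<omega>_def)
  have "(\<Sum>i<N. exp (\<i> * of_real (2 * real_of_int p * (pi * (z + real i) / real N)))) =
      c * (\<Sum>i<N. \<omega>^i)"
    by (simp only: term_eq sum_distrib_left)
  also have "\<dots> = (if p = 0 then of_nat N else 0)"
    using \<omega>_eq_1 \<omega>_power_N by (simp add: sum_gp_strict c_def)
  finally show ?thesis .
qed

lemma sum_sin_power_shifted:
  fixes m :: nat and z :: real
  defines "N \<equiv> Suc m"
  shows "(\<Sum>i<N. sin (pi * (z + real i) / real N) ^ (2*m)) = real N * real ((2*m) choose m) / 4^m"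
proof -
  have roots: "(\<Sum>i<N. exp (\<i> * of_real (2 * real_of_int (int k - int m) *
        (pi * (z + real i) / real N)))) = (if k = m then of_nat N else 0)"
    if "k \<le> 2*m" for k
    using sum_exp_shifted_roots_of_unity[of "int k - int m" N z] that by (simp add: N_def)
  have "complex_of_real (\<Sum>i<N. sin (pi * (z + real i) / real N) ^ (2*m)) =
     (\<Sum>i<N. (\<Sum>k\<le>2*m. of_nat ((2*m) choose k) * (-1)^(2*m-k) *
        exp (\<i> * of_real (2 * real_of_int (int k - int m) * (pi * (z + real i) / real N))))
        / (-4)^m)"
    by (simp only: of_real_sum sin_power_even_eq_exp_sum)
  also have "\<dots> = (\<Sum>k\<le>2*m. of_nat ((2*m) choose k) * (-1)^(2*m-k) *
        (\<Sum>i<N. exp (\<i> * of_real (2 * real_of_int (int k - int m) *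
          (pi * (z + real i) / real N))))) / (-4)^m"
    by (simp add: sum_divide_distrib sum_distrib_left sum.swap[of _ "{..<N}"])
  also have "\<dots> = (\<Sum>k\<le>2*m. of_nat ((2*m) choose k) * (-1)^(2*m-k) *
        (if k = m then of_nat N else 0)) / (-4)^m"
    using roots by (intro arg_cong2[where f="(/)"] sum.cong refl) simp_all
  also have "\<dots> = of_nat ((2*m) choose m) * (-1)^m * of_nat N / (-4)^m"
    by (simp add: if_distrib sum.delta cong: if_cong)
  also have "\<dots> = complex_of_real (real N * real ((2*m) choose m) / 4^m)"
    by (simp add: power_minus' field_simps)
  finally show ?thesis by (simp only: of_real_eq_iff)
qed

fun Ck_real :: "nat \<Rightarrow> (real \<Rightarrow> real) \<Rightarrow> bool" where
  "Ck_real 0 f = continuous_on UNIV f"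
| "Ck_real (Suc k) f = (continuous_on UNIV f \<and>
      (\<exists>f'. (\<forall>t. (f has_real_derivative f' t) (at t)) \<and> Ck_real k f'))"

lemma Ck_real_imp_continuous_on: "Ck_real k f \<Longrightarrow> continuous_on UNIV f"
  by (cases k) auto

lemma Ck_real_Suc_imp_Ck_real: "Ck_real (Suc k) f \<Longrightarrow> Ck_real k f"
proof (induction k arbitrary: f)
  case (Suc k)
  then obtain f' where "continuous_on UNIV f" "\<forall>t. (f has_real_derivative f' t) (at t)"
    "Ck_real (Suc k) f'" by auto
  with Suc.IH[of f'] show ?case by auto
qed auto

inductive_set trig_poly :: "real \<Rightarrow> (real \<Rightarrow> real) set" for a :: real where
  trig_poly_sin: "(\<lambda>t. sin (a*t)) \<in> trig_poly a"
| trig_poly_cos: "(\<lambda>t. cos (a*t)) \<in> trig_poly a"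
| trig_poly_const: "(\<lambda>t. c) \<in> trig_poly a"
| trig_poly_add: "f \<in> trig_poly a \<Longrightarrow> g \<in> trig_poly a \<Longrightarrow> (\<lambda>t. f t + g t) \<in> trig_poly a"
| trig_poly_mult: "f \<in> trig_poly a \<Longrightarrow> g \<in> trig_poly a \<Longrightarrow> (\<lambda>t. f t * g t) \<in> trig_poly a"

lemma trig_poly_has_derivative:
  "f \<in> trig_poly a \<Longrightarrow> \<exists>f'\<in>trig_poly a. \<forall>t. (f has_real_derivative f' t) (at t)"
proof (induction rule: trig_poly.induct)
  case trig_poly_sin
  have "(\<lambda>t. a * cos (a*t)) \<in> trig_poly a" by (intro trig_poly.intros)
  thus ?case by (intro bexI[where x="\<lambda>t. a * cos (a*t)"]) (auto intro!: derivative_eq_intros)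
next
  case trig_poly_cos
  have "(\<lambda>t. (-a) * sin (a*t)) \<in> trig_poly a" by (intro trig_poly.intros)
  thus ?case by (intro bexI[where x="\<lambda>t. (-a) * sin (a*t)"]) (auto intro!: derivative_eq_intros)
next
  case (trig_poly_const c)
  show ?case by (intro bexI[where x="\<lambda>t. 0"] trig_poly.intros) auto
next
  case (trig_poly_add f g)
  then obtain f' g' where "f' \<in> trig_poly a" "g' \<in> trig_poly a"
    "\<forall>t. (f has_real_derivative f' t) (at t)" "\<forall>t. (g has_real_derivative g' t) (at t)"
    by blast
  thus ?case
    by (intro bexI[where x="\<lambda>t. f' t + g' t"] trig_poly.intros) (auto intro!: derivative_eq_intros)
next
  case (trig_poly_mult f g)
  then obtain f' g' where "f' \<in> trig_poly a" "g' \<in> trig_poly a"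
    "\<forall>t. (f has_real_derivative f' t) (at t)" "\<forall>t. (g has_real_derivative g' t) (at t)"
    by blast
  with trig_poly_mult.hyps show ?case
    by (intro bexI[where x="\<lambda>t. f' t * g t + f t * g' t"] trig_poly.intros)
       (auto intro!: derivative_eq_intros)
qed

lemma continuous_on_trig_poly: "f \<in> trig_poly a \<Longrightarrow> continuous_on UNIV f"
  by (metis trig_poly_has_derivative DERIV_isCont continuous_at_imp_continuous_on)

lemma has_real_derivative_at_split:
  assumes "(f has_real_derivative D) (at x within {..x})"
    and "(f has_real_derivative D) (at x within {x..})"
  shows "(f has_real_derivative D) (at x)"
proof -
  have "((\<lambda>y. (f y - f x) / (y - x)) \<longlongrightarrow> D) (at x within ({..x} \<union> {x..}))"
    using assms unfolding has_field_derivative_iff by (rule Lim_Un)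
  moreover have "{..x} \<union> {x..} = (UNIV::real set)" by auto
  ultimately show ?thesis unfolding has_field_derivative_iff by simp
qed

lemma continuous_on_mult_indicator_interval:
  fixes F :: "real \<Rightarrow> real"
  assumes "continuous_on UNIV F" "F 0 = 0" "F L = 0" "0 \<le> L"
  shows "continuous_on UNIV (\<lambda>t. F t * indicator {0..L} t)"
proof -
  let ?G = "\<lambda>t. F t * indicator {0..L} t"
  have "continuous_on {..0} ?G" "continuous_on {L..} ?G"
    by (rule continuous_on_eq[OF continuous_on_const[of _ 0]];
        use assms in \<open>auto simp: indicator_def\<close>)+
  moreover have "continuous_on {0..L} ?G"
    by (rule continuous_on_eq[OF continuous_on_subset[OF assms(1)]]) (auto simp: indicator_def)
  ultimately have "continuous_on ({..0} \<union> {0..L} \<union> {L..}) ?G"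
    by (intro continuous_on_closed_Un) auto
  moreover have "{..0} \<union> {0..L} \<union> {L..} = (UNIV::real set)" by auto
  ultimately show ?thesis by simp
qed

lemma has_real_derivative_mult_indicator_interval:
  fixes F F' :: "real \<Rightarrow> real"
  assumes F': "\<And>t. (F has_real_derivative F' t) (at t)"
    and zero: "F 0 = 0" "F L = 0" "F' 0 = 0" "F' L = 0" and L: "0 < L"
  shows "((\<lambda>t. F t * indicator {0..L} t) has_real_derivative (F' t * indicator {0..L} t)) (at t)"
proof -
  let ?G = "\<lambda>t. F t * indicator {0..L} t"
  have outside: "(?G has_real_derivative 0) (at t)" if "t \<in> S" "open S" "S \<inter> {0..L} = {}" for S
    by (rule has_field_derivative_transform_within_open[where f="\<lambda>_. 0", OF DERIV_const that(2,1)])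
       (use that in \<open>auto simp: indicator_def\<close>)
  consider "t < 0" | "t = 0" | "0 < t \<and> t < L" | "t = L" | "L < t" by linarith
  thus ?thesis
  proof cases
    case 1
    moreover have "{..<0} \<inter> {0..L} = {}" by auto
    ultimately show ?thesis using outside[of "{..<0}"] by simp
  next
    case 5
    moreover have "{L<..} \<inter> {0..L} = {}" by auto
    ultimately show ?thesis using outside[of "{L<..}"] L by simp
  next
    case 3
    have "(?G has_real_derivative F' t) (at t)"
      by (rule has_field_derivative_transform_within_open[OF F', where S="{0<..<L}"])
         (use 3 in \<open>auto simp: indicator_def\<close>)
    thus ?thesis using 3 by (simp add: indicator_def)
  next
    case 2
    have "(?G has_real_derivative 0) (at 0 within {..0})"
      by (rule has_field_derivative_transform_within[OF
            DERIV_const[THEN has_field_derivative_at_within] zero_less_one])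
         (use zero in \<open>auto simp: indicator_def\<close>)
    moreover have "(?G has_real_derivative 0) (at 0 within {0..})"
      by (rule has_field_derivative_transform_within[OF
            F'[of 0, unfolded zero(3), THEN has_field_derivative_at_within] L])
         (use zero in \<open>auto simp: indicator_def dist_real_def\<close>)
    ultimately show ?thesis using 2 zero by (simp add: has_real_derivative_at_split)
  next
    case 4
    have "(?G has_real_derivative 0) (at L within {L..})"
      by (rule has_field_derivative_transform_within[OF
            DERIV_const[THEN has_field_derivative_at_within] zero_less_one])
         (use zero in \<open>auto simp: indicator_def\<close>)
    moreover have "(?G has_real_derivative 0) (at L within {..L})"
      by (rule has_field_derivative_transform_within[OF
            F'[of L, unfolded zero(4), THEN has_field_derivative_at_within] L])
         (use zero L in \<open>auto simp: indicator_def dist_real_def\<close>)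
    ultimately show ?thesis using 4 zero by (simp add: has_real_derivative_at_split)
  qed
qed

lemma Ck_real_sin_power_mult_indicator:
  assumes aL: "sin (a*L) = 0" and L: "0 < L"
    and "g \<in> trig_poly a" "k < j"
  shows "Ck_real k (\<lambda>t. sin (a*t)^j * g t * indicator {0..L} t)"
  using assms(3,4)
proof (induction k arbitrary: j g)
  case 0
  have "continuous_on UNIV (\<lambda>t. sin (a*t)^j * g t)"
    by (intro continuous_intros continuous_on_trig_poly[OF 0(1)])
  hence "continuous_on UNIV (\<lambda>t. sin (a*t)^j * g t * indicator {0..L} t)"
    by (rule continuous_on_mult_indicator_interval) (use 0 aL L in auto)
  thus ?case by simp
next
  case (Suc k)
  obtain i where j: "j = Suc i" and k_i: "k < i" using Suc.prems(2) by (cases j) auto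
  obtain g' where g': "g' \<in> trig_poly a" "\<And>t. (g has_real_derivative g' t) (at t)"
    using trig_poly_has_derivative[OF Suc.prems(1)] by blast
  define h where "h = (\<lambda>t. real j * a * cos (a*t) * g t + sin (a*t) * g' t)"
  have h: "h \<in> trig_poly a" unfolding h_def by (intro trig_poly.intros Suc.prems(1) g'(1))
  have "((\<lambda>t. sin (a*t)^j * g t) has_real_derivative sin (a*t)^i * h t) (at t)" for t
  proof -
    have "(x::real) * x^(i - 1) = x^i" for x using k_i by (cases i) auto
    thus ?thesis
      unfolding j h_def by (auto intro!: derivative_eq_intros g'(2) simp: algebra_simps)
  qed
  hence "((\<lambda>t. sin (a*t)^j * g t * indicator {0..L} t) has_real_derivative
      sin (a*t)^i * h t * indicator {0..L} t) (at t)" for t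
    by (rule has_real_derivative_mult_indicator_interval) (use j k_i aL L in auto)
  moreover have "continuous_on UNIV (\<lambda>t. sin (a*t)^j * g t * indicator {0..L} t)"
    by (rule continuous_on_mult_indicator_interval)
       (use j aL L in \<open>auto intro!: continuous_intros continuous_on_trig_poly[OF Suc.prems(1)]\<close>)
  moreover have "Ck_real k (\<lambda>t. sin (a*t)^i * h t * indicator {0..L} t)"
    by (rule Suc.IH[OF h k_i])
  ultimately show ?case by (auto intro!: exI[of _ "\<lambda>t. sin (a*t)^i * h t * indicator {0..L} t"])
qed

lemma continuous_on_tensor_product:
  fixes h :: "'n::finite \<Rightarrow> real \<Rightarrow> real"
  assumes "\<And>j. continuous_on UNIV (h j)"
  shows "continuous_on UNIV (\<lambda>x::real^'n. \<Prod>j\<in>UNIV. h j (x $ j))"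
  by (intro continuous_on_prod continuous_on_compose2[OF assms] continuous_intros) auto

lemma has_real_derivative_partial_tensor_product:
  fixes x :: "real^'n" and h :: "'n::finite \<Rightarrow> real \<Rightarrow> real"
  assumes "\<And>t. (h i has_real_derivative h' t) (at t)"
  shows "((\<lambda>t. \<Prod>j\<in>UNIV. h j ((x + t *\<^sub>R axis i 1) $ j)) has_real_derivative
           (\<Prod>j\<in>UNIV. (h(i := h')) j (x $ j))) (at 0)"
proof -
  define C where "C = (\<Prod>j\<in>UNIV-{i}. h j (x $ j))"
  have moving: "(\<Prod>j\<in>UNIV. h j ((x + t *\<^sub>R axis i 1) $ j)) = h i (t + x $ i) * C" for t
  proof -
    have "(\<Prod>j\<in>UNIV. h j ((x + t *\<^sub>R axis i 1) $ j)) =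
        h i ((x + t *\<^sub>R axis i 1) $ i) * (\<Prod>j\<in>UNIV-{i}. h j ((x + t *\<^sub>R axis i 1) $ j))"
      by (rule prod.remove) simp_all
    also have "(\<Prod>j\<in>UNIV-{i}. h j ((x + t *\<^sub>R axis i 1) $ j)) = C"
      unfolding C_def by (intro prod.cong) (auto simp: axis_def)
    finally show ?thesis by (simp add: axis_def add.commute)
  qed
  have "(\<Prod>j\<in>UNIV. (h(i := h')) j (x $ j)) =
      (h(i := h')) i (x $ i) * (\<Prod>j\<in>UNIV-{i}. (h(i := h')) j (x $ j))"
    by (rule prod.remove) simp_all
  also have "(\<Prod>j\<in>UNIV-{i}. (h(i := h')) j (x $ j)) = C"
    unfolding C_def by (intro prod.cong) auto
  finally have derivative: "(\<Prod>j\<in>UNIV. (h(i := h')) j (x $ j)) = h' (x $ i) * C"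
    by simp
  have "((\<lambda>t. h i (t + x $ i) * C) has_real_derivative h' (x $ i) * C) (at 0)"
    using DERIV_shift[of "h i" "h' (x $ i)" 0 "x $ i"] assms by (intro DERIV_cmult_right) simp
  thus ?thesis by (simp only: moving derivative)
qed

lemma Cm_tensor_product:
  fixes h :: "'n::finite \<Rightarrow> real \<Rightarrow> real"
  shows "(\<And>j. Ck_real m (h j)) \<Longrightarrow> Cm m (\<lambda>x::real^'n. \<Prod>j\<in>UNIV. h j (x $ j))"
proof (induction m arbitrary: h)
  case 0
  thus ?case by (simp add: continuous_on_tensor_product)
next
  case (Suc m)
  obtain h' where h': "\<And>j t. (h j has_real_derivative h' j t) (at t)" "\<And>j. Ck_real m (h' j)"
    using Suc.prems by simp metis
  have "\<exists>g. (\<forall>x. ((\<lambda>t. \<Prod>j\<in>UNIV. h j ((x + t *\<^sub>R axis i 1) $ j)) has_real_derivative g x) (at 0))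
      \<and> Cm m g" for i
  proof (intro exI conjI allI)
    show "Cm m (\<lambda>x::real^'n. \<Prod>j\<in>UNIV. (h(i := h' i)) j (x $ j))"
      by (rule Suc.IH) (use h'(2) Ck_real_Suc_imp_Ck_real Suc.prems in auto)
  qed (rule has_real_derivative_partial_tensor_product[OF h'(1)])
  moreover have "continuous_on UNIV (\<lambda>x::real^'n. \<Prod>j\<in>UNIV. h j (x $ j))"
    by (intro continuous_on_tensor_product Ck_real_imp_continuous_on[OF Suc.prems])
  ultimately show ?case by simp
qed

definition bump :: "nat \<Rightarrow> real \<Rightarrow> real" where
  "bump N t = (4::real) ^ (N - 1) / (real N * real ((2*N - 2) choose (N - 1)))
       * sin (pi * t / real N) ^ (2*N - 2) * indicator {0..real N} t"

lemma Ptrig_mult_indicator_eq_prod_bump: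
  fixes x :: "real^'n"
  shows "Ptrig N x * indicator (cubeN N) x = (\<Prod>j\<in>UNIV. bump N (x $ j))"
proof -
  define c where "c = (4::real) ^ (N - 1) / (real N * real ((2*N - 2) choose (N - 1)))"
  have "indicator (cubeN N) x = (\<Prod>j\<in>UNIV. indicator {0..real N} (x $ j) :: real)"
    by (auto simp: cubeN_def indicator_def prod_zero)
  moreover have "(\<Prod>j\<in>UNIV. bump N (x $ j)) = (\<Prod>j\<in>(UNIV::'n set). c) *
      (\<Prod>j\<in>UNIV. sin (pi * x $ j / real N) ^ (2*N - 2)) * (\<Prod>j\<in>UNIV. indicator {0..real N} (x $ j))"
    unfolding bump_def c_def[symmetric] by (simp only: prod.distrib)
  ultimately show ?thesis unfolding Ptrig_def c_def by simp
qed

lemma Ck_real_bump: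
  assumes "N \<ge> 2"
  shows "Ck_real (2*N - 3) (bump N)"
proof -
  define c where "c = (4::real) ^ (N - 1) / (real N * real ((2*N - 2) choose (N - 1)))"
  have "Ck_real (2*N - 3) (\<lambda>t. sin ((pi / real N)*t)^(2*N-2) * c * indicator {0..real N} t)"
    by (rule Ck_real_sin_power_mult_indicator) (use assms in \<open>auto intro: trig_poly.intros\<close>)
  moreover have "(\<lambda>t. sin ((pi / real N)*t)^(2*N-2) * c * indicator {0..real N} t) = bump N"
    by (auto simp: bump_def c_def fun_eq_iff)
  ultimately show ?thesis by simp
qed

lemma finite_integer_translates_in_interval:
  "finite {k::int. y + real_of_int k \<in> {a..b}}"
proof (rule finite_subset)
  show "{k::int. y + real_of_int k \<in> {a..b}} \<subseteq> {\<lceil>a - y\<rceil>..\<lfloor>b - y\<rfloor>}"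
    by (auto simp: ceiling_le_iff le_floor_iff)
qed simp

lemma sum_bump_integer_translates:
  assumes "N \<ge> 2"
  shows "(\<Sum>k | y + real_of_int k \<in> {0..real N}. bump N (y + real_of_int k)) = 1"
proof -
  obtain m where m: "N = Suc m" using assms by (cases N) auto
  define k0 where "k0 = \<lceil>-y\<rceil>"
  have k0: "0 \<le> y + real_of_int k0" "y + real_of_int k0 < 1"
    unfolding k0_def by linarith+
  let ?S = "{k. y + real_of_int k \<in> {0..real N}}"
  let ?window = "{k0..<k0 + int N}"
  have "(\<Sum>k\<in>?S. bump N (y + real_of_int k)) = (\<Sum>k\<in>?window. bump N (y + real_of_int k))"
  proof (rule sum.mono_neutral_right[OF finite_integer_translates_in_interval])
    show "?window \<subseteq> ?S" using k0 by auto
    show "\<forall>k\<in>?S - ?window. bump N (y + real_of_int k) = 0"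
    proof
      fix k assume "k \<in> ?S - ?window"
      with k0 have "y + real_of_int k = real N" by auto
      thus "bump N (y + real_of_int k) = 0" using m assms by (simp add: bump_def)
    qed
  qed
  also have "\<dots> = (\<Sum>i<N. bump N (y + real_of_int (k0 + int i)))"
    by (rule sum.reindex_bij_betw[symmetric], rule bij_betwI[where g="\<lambda>k. nat (k - k0)"]) auto
  also have "\<dots> = (4::real) ^ m / (real N * real ((2*m) choose m)) *
      (\<Sum>i<N. sin (pi * (y + real_of_int k0 + real i) / real N) ^ (2*m))"
    unfolding sum_distrib_left using k0 m by (intro sum.cong refl) (auto simp: bump_def add.assoc)
  also have "\<dots> = 1"
    unfolding m sum_sin_power_shifted by simp
  finally show ?thesis .
qed

lemma has_sum_prod_finite_supports:
  fixes g :: "'i::finite \<Rightarrow> 'k \<Rightarrow> 'a::{comm_semiring_1, topological_space}"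
  assumes "\<And>j. finite (S j)" "\<And>j k. k \<notin> S j \<Longrightarrow> g j k = 0"
  shows "((\<lambda>p. \<Prod>j\<in>UNIV. g j (p j)) has_sum (\<Prod>j\<in>UNIV. \<Sum>k\<in>S j. g j k)) UNIV"
proof (rule has_sum_finite_neutralI[where B="PiE UNIV S"])
  show "finite (PiE UNIV S)" by (intro finite_PiE assms) simp
  show "(\<Prod>j\<in>UNIV. g j (p j)) = 0" if "p \<in> UNIV - PiE UNIV S" for p
  proof -
    from that obtain j where "p j \<notin> S j" by (auto simp: PiE_iff)
    thus ?thesis using assms(2) by (intro prod_zero bexI[where x=j]) auto
  qed
  show "(\<Prod>j\<in>UNIV. \<Sum>k\<in>S j. g j k) = (\<Sum>p\<in>PiE UNIV S. \<Prod>j\<in>UNIV. g j (p j))"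
    by (rule prod_sum_PiE) (simp_all add: assms)
qed simp

theorem corollary3p3:
  fixes N :: nat
  assumes "CARD('n::finite) \<ge> 2"
    and "N \<ge> 2"
  shows "(\<forall>x::real^'n.
           ((\<lambda>n::int^'n. Ptrig N (x + latt n) * indicator (cubeN N) (x + latt n)) has_sum 1) UNIV)
         \<and> Cm (2*N - 3) (\<lambda>x::real^'n. Ptrig N x * indicator (cubeN N) x)"
  \<comment> \<open>The argument works in every dimension.\<close>
proof (intro conjI allI)
  show "Cm (2*N - 3) (\<lambda>x::real^'n. Ptrig N x * indicator (cubeN N) x)"
    unfolding Ptrig_mult_indicator_eq_prod_bump
    by (intro Cm_tensor_product Ck_real_bump assms(2))
  fix x :: "real^'n"
  have "((\<lambda>p. \<Prod>j\<in>UNIV. bump N (x $ j + real_of_int (p j))) has_sum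
      (\<Prod>j\<in>UNIV. \<Sum>k | x $ j + real_of_int k \<in> {0..real N}. bump N (x $ j + real_of_int k))) UNIV"
    by (rule has_sum_prod_finite_supports[OF finite_integer_translates_in_interval])
       (simp add: bump_def)
  hence "((\<lambda>p. \<Prod>j\<in>UNIV. bump N (x $ j + real_of_int (p j))) has_sum 1) UNIV"
    by (simp only: sum_bump_integer_translates[OF assms(2)] prod.neutral_const)
  moreover have "bij_betw vec_nth (UNIV::(int^'n) set) UNIV"
    by (rule bij_betwI[where g=vec_lambda]) (simp_all add: vec_lambda_inverse)
  ultimately show "((\<lambda>n::int^'n. Ptrig N (x + latt n) * indicator (cubeN N) (x + latt n))
      has_sum 1) UNIV"
    by (simp add: Ptrig_mult_indicator_eq_prod_bump latt_def has_sum_reindex_bij_betw[where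
          g=vec_nth and f="\<lambda>p. \<Prod>j\<in>UNIV. bump N (x $ j + real_of_int (p j))"])
qed

end
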